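(* Suppose that every connected finite simple graph $G$ of order $n\geq 5$ with non-singular adjacency matrix satisfies $\mathcal{E}(G)\geq n-1+\bar d$. Then every finite simple graph $G$ (connected or not) of order $n\geq 5$ with non-singular adjacency matrix satisfies $\mathcal{E}(G)\geq n-1+\bar d$.
   Context: For a finite simple graph $G$ with $n$ vertices and $m$ edges, $A(G)$ is its adjacency matrix with eigenvalues $\lambda_1\ge\cdots\ge\lambda_n$, and the energy is $\mathcal{E}(G)=\sum_{i=1}^n|\lambda_i|$. $\bar d=2m/n$ is the average degree. *)

theory Defs
  imports "Jordan_Normal_Form.Char_Poly" "Jordan_Normal_Form.Determinant"
begin

definition simple_graph :: "nat \<Rightarrow> (nat \<Rightarrow> nat \<Rightarrow> bool) \<Rightarrow> bool" where
  "simple_graph n E \<longleftrightarrow>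
     (\<forall>i j. E i j \<longrightarrow> i < n \<and> j < n \<and> i \<noteq> j \<and> E j i)"

definition connected_graph :: "nat \<Rightarrow> (nat \<Rightarrow> nat \<Rightarrow> bool) \<Rightarrow> bool" where
  "connected_graph n E \<longleftrightarrow> (\<forall>i<n. \<forall>j<n. E\<^sup>*\<^sup>* i j)"

definition num_edges :: "nat \<Rightarrow> (nat \<Rightarrow> nat \<Rightarrow> bool) \<Rightarrow> nat" where
  "num_edges n E = card {(i, j). i < j \<and> j < n \<and> E i j}"

definition avg_degree :: "nat \<Rightarrow> (nat \<Rightarrow> nat \<Rightarrow> bool) \<Rightarrow> real" where
  "avg_degree n E = 2 * real (num_edges n E) / real n"

definition adj_matrix :: "nat \<Rightarrow> (nat \<Rightarrow> nat \<Rightarrow> bool) \<Rightarrow> real mat" where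
  "adj_matrix n E = mat n n (\<lambda>(i, j). if E i j then 1 else 0)"

text \<open>Energy: sum of absolute values of the eigenvalues (with multiplicity),
  i.e. of the roots of the characteristic polynomial (taken over the complex
  numbers; for a real symmetric matrix they are all real).\<close>
definition energy :: "nat \<Rightarrow> (nat \<Rightarrow> nat \<Rightarrow> bool) \<Rightarrow> real" where
  "energy n E = sum_mset (image_mset cmod
      (proots (char_poly (map_mat complex_of_real (adj_matrix n E)))))"

end

theory Submission
  imports Defs "Jordan_Normal_Form.Schur_Decomposition"
begin

text \<open>
  Induction on the order \<open>n\<close>. If \<open>G\<close> is disconnected, relabel its vertices so that a union of
  components occupies \<open>{0..<a}\<close>; then \<open>A(G)\<close> is block diagonal with blocks \<open>A(G\<^sub>1)\<close> and
  \<open>A(G\<^sub>2)\<close>, so energies, determinants and numbers of edges add up, and both blocks are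
  nonsingular. Nonsingularity also excludes isolated vertices, so each \<open>G\<^sub>i\<close> has order
  \<open>k\<^sub>i \<ge> 2\<close> and \<open>2m\<^sub>i \<ge> k\<^sub>i\<close>. It then suffices that each block satisfies
  \<open>\<E>(G\<^sub>i) \<ge> k\<^sub>i + (2m\<^sub>i - k\<^sub>i)/n\<close>, since these shares add up to \<open>n - 1 + 2m/n\<close>.
  For \<open>k\<^sub>i \<ge> 5\<close> this follows from the induction hypothesis \<open>\<E>(G\<^sub>i) \<ge> k\<^sub>i - 1 + 2m\<^sub>i/k\<^sub>i\<close>
  because \<open>k\<^sub>i < n\<close>. For \<open>k\<^sub>i \<le> 4\<close> (hence \<open>n \<ge> k\<^sub>i + 2\<close>) it follows from the constraints
  on the real spectrum \<open>\<lambda>\<^sub>1, \<dots>, \<lambda>\<^sub>k\<close>: \<open>\<Sum> \<lambda>\<^sub>j = 0\<close>, \<open>\<Sum> \<lambda>\<^sub>j\<^sup>2 = 2m\<close> and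
  \<open>\<bar>\<Prod> \<lambda>\<^sub>j\<bar> = \<bar>det A\<bar> \<ge> 1\<close>, the determinant being a nonzero integer.
\<close>

section \<open>Energy bounds from the spectral constraints\<close>

text \<open>
  For the spectrum of a nonsingular graph of order 3 or 4 with \<open>c = 2m\<close>, the bounds
  \<open>(12 + c)/5 = 3 + (c - 3)/5\<close> and \<open>(20 + c)/6 = 4 + (c - 4)/6\<close> are exactly the shares
  needed in a graph of order \<open>n \<ge> 5\<close>, resp. \<open>n \<ge> 6\<close>. After sorting the eigenvalues,
  the signs of the middle ones determine which positive eigenvalues balance which
  negative ones.
\<close>

lemma sum_bound_one_vs_two:
  fixes x u v c :: real
  assumes u: "u > 0" and v: "v > 0" and balance: "x = u + v"
    and squares: "x\<^sup>2 + u\<^sup>2 + v\<^sup>2 = c" and prod: "x * u * v \<ge> 1" and c: "c = 4 \<or> c = 6"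
  shows "2 * x \<ge> (12 + c) / 5"
proof (rule ccontr)
  define r where "r = (12 + c) / 10"
  assume "\<not> ?thesis"
  then have "x < r" unfolding r_def by simp
  have uv: "u * v = x\<^sup>2 - c / 2"
    using squares balance by (simp add: power2_eq_square algebra_simps)
  then have pos: "x\<^sup>2 - c / 2 > 0" using u v by (metis mult_pos_pos)
  have "x > 0" using u v balance by simp
  then have "x\<^sup>2 < r\<^sup>2" using \<open>x < r\<close> by (intro power_strict_mono) auto
  then have "x * (x\<^sup>2 - c / 2) < r * (r\<^sup>2 - c / 2)"
    using \<open>x < r\<close> \<open>x > 0\<close> pos by (intro mult_strict_mono) auto
  also have "r * (r\<^sup>2 - c / 2) < 1"
    using c unfolding r_def by (auto simp: power2_eq_square)
  finally show False using prod uv by (simp add: mult.assoc)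
qed

lemma sum_bound_one_vs_three:
  fixes x u v t c :: real
  assumes u: "u > 0" and v: "v > 0" and t: "t > 0" and balance: "x = u + v + t"
    and squares: "x\<^sup>2 + u\<^sup>2 + v\<^sup>2 + t\<^sup>2 = c"
    and prod: "x * u * v * t \<ge> 1" and c: "c = 4 \<or> 6 \<le> c \<and> c \<le> 25"
  shows "2 * x \<ge> (20 + c) / 6"
proof -
  define e where "e = u * v + u * t + v * t"
  have "e > 0" using u v t unfolding e_def by (intro add_pos_pos mult_pos_pos)
  have "e\<^sup>2 \<ge> 3 * (u * v * t) * (u + v + t)"
    using sum_squares_ge_zero[of "u * v - u * t" "u * t - v * t"]
      zero_le_power2[of "v * t - u * v"]
    unfolding e_def by (simp add: power2_eq_square algebra_simps)
  then have "e\<^sup>2 \<ge> 3" using prod balance by (simp add: algebra_simps)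
  have e: "e \<ge> 17 / 10"
  proof (rule ccontr)
    assume "\<not> ?thesis"
    then have "e\<^sup>2 < (17 / 10)\<^sup>2" using \<open>e > 0\<close> by (intro power_strict_mono) auto
    then show False using \<open>e\<^sup>2 \<ge> 3\<close> by (simp add: power2_eq_square)
  qed
  have "3 * e \<le> x\<^sup>2"
    using sum_squares_ge_zero[of "u - v" "u - t"] zero_le_power2[of "v - t"]
    unfolding e_def balance by (simp add: power2_eq_square algebra_simps)
  moreover have c_eq: "c = 2 * x\<^sup>2 - 2 * e"
    using squares unfolding e_def balance by (simp add: power2_eq_square algebra_simps)
  \<comment> \<open>in particular \<open>c = 4\<close> is impossible, as it would force \<open>e \<le> 1\<close>\<close>
  ultimately have c_range: "6 \<le> c" "c \<le> 25" using c e by auto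
  have "((20 + c) / 6)\<^sup>2 \<le> 2 * c + 68 / 10"
    using mult_nonneg_nonpos[of "c - 6" "c - 25"] c_range
    by (simp add: power2_eq_square field_simps)
  also have "\<dots> \<le> (2 * x)\<^sup>2" using c_eq e by (simp add: power2_eq_square)
  finally show ?thesis
    by (rule power2_le_imp_le) (use u v t balance in simp)
qed

lemma sum_bound_two_vs_two:
  fixes x y z w c :: real
  assumes x: "x > 0" and y: "y > 0" and z: "z > 0" and w: "w > 0"
    and balance: "x + y = z + w" and squares: "x\<^sup>2 + y\<^sup>2 + z\<^sup>2 + w\<^sup>2 = c"
    and prod: "x * y * z * w \<ge> 1" and c: "4 \<le> c" "c \<le> 28"
  shows "2 * (x + y) \<ge> (20 + c) / 6"
proof -
  define p where "p = x + y"
  have "(x * y + z * w)\<^sup>2 \<ge> 4 * (x * y * z * w)"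
    using zero_le_power2[of "x * y - z * w"] by (simp add: power2_eq_square algebra_simps)
  then have "2\<^sup>2 \<le> (x * y + z * w)\<^sup>2" using prod by simp
  then have pairs: "2 \<le> x * y + z * w"
    by (rule power2_le_imp_le) (use x y z w in simp)
  have c_eq: "c = 2 * p\<^sup>2 - 2 * (x * y + z * w)"
  proof -
    have "z\<^sup>2 + w\<^sup>2 = p\<^sup>2 - 2 * z * w"
      using balance unfolding p_def by (simp add: power2_eq_square algebra_simps)
    then show ?thesis
      using squares unfolding p_def by (simp add: power2_eq_square algebra_simps)
  qed
  have "((20 + c) / 6)\<^sup>2 \<le> 2 * c + 8"
    using mult_nonneg_nonpos[of "c - 4" "c - 28"] c
    by (simp add: power2_eq_square field_simps)
  also have "\<dots> \<le> (2 * p)\<^sup>2" using c_eq pairs by (simp add: power2_eq_square)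
  finally have "(20 + c) / 6 \<le> 2 * p"
    by (rule power2_le_imp_le) (use x y p_def in simp)
  then show ?thesis unfolding p_def .
qed

lemma sorted_mset_listE:
  obtains xs where "M = mset xs" "sorted xs" "length xs = size M"
  by (metis mset_sorted_list_of_multiset size_mset sorted_sorted_list_of_multiset)

lemma sum_abs_two:
  fixes M :: "real multiset"
  assumes size: "size M = 2" and sum: "sum_mset M = 0"
    and squares: "sum_mset (image_mset (\<lambda>x. x\<^sup>2) M) = 2"
  shows "sum_mset (image_mset abs M) = 2"
proof -
  obtain x y where "M = {#x, y#}"
    using sorted_mset_listE[of M] size by (metis length_Suc_conv numeral_2_eq_2 length_0_conv mset.simps)
  then have M: "M = {#x, - x#}" using sum by (simp add: eq_neg_iff_add_eq_0)
  then have "\<bar>x\<bar> = 1" using squares by (auto simp: power2_eq_1_iff)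
  then show ?thesis unfolding M by simp
qed

lemma sum_abs_bound_three:
  fixes M :: "real multiset"
  assumes size: "size M = 3" and sum: "sum_mset M = 0"
    and squares: "sum_mset (image_mset (\<lambda>x. x\<^sup>2) M) = c"
    and prod: "\<bar>prod_mset M\<bar> \<ge> 1" and c: "c = 4 \<or> c = 6"
  shows "sum_mset (image_mset abs M) \<ge> (12 + c) / 5"
proof -
  obtain xs where M: "M = mset xs" and "sorted xs" "length xs = 3"
    using sorted_mset_listE size by metis
  then obtain x y z where "xs = [x, y, z]" by (auto simp: numeral_3_eq_3 length_Suc_conv)
  then have M: "M = {#x, y, z#}" and "x \<le> y" "y \<le> z" using M \<open>sorted xs\<close> by auto
  have "y \<noteq> 0" using prod M by auto
  then consider "y < 0" | "y > 0" by linarith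
  then show ?thesis
  proof cases
    case 1
    then have "z = - x + - y" "z > 0" using M sum \<open>x \<le> y\<close> by auto
    moreover have "z\<^sup>2 + (- x)\<^sup>2 + (- y)\<^sup>2 = c" using squares M by (simp add: add_ac)
    moreover have "z * - x * - y \<ge> 1" using prod M 1 \<open>x \<le> y\<close> \<open>z > 0\<close> by (simp add: abs_mult mult_ac)
    ultimately have "2 * z \<ge> (12 + c) / 5"
      using sum_bound_one_vs_two[of "- x" "- y" z c] 1 \<open>x \<le> y\<close> c by auto
    then show ?thesis using M 1 \<open>x \<le> y\<close> \<open>z > 0\<close> \<open>z = - x + - y\<close> by simp
  next
    case 2
    then have "- x = y + z" "z > 0" using M sum \<open>y \<le> z\<close> by auto
    moreover have "(- x)\<^sup>2 + y\<^sup>2 + z\<^sup>2 = c" using squares M by (simp add: add_ac)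
    moreover have "- x * y * z \<ge> 1" using prod M 2 \<open>z > 0\<close> \<open>- x = y + z\<close> by (simp add: abs_mult mult_ac)
    ultimately have "2 * - x \<ge> (12 + c) / 5"
      using sum_bound_one_vs_two[of y z "- x" c] 2 c by auto
    then show ?thesis using M 2 \<open>z > 0\<close> \<open>- x = y + z\<close> by simp
  qed
qed

lemma sum_abs_bound_four:
  fixes M :: "real multiset"
  assumes size: "size M = 4" and sum: "sum_mset M = 0"
    and squares: "sum_mset (image_mset (\<lambda>x. x\<^sup>2) M) = c"
    and prod: "\<bar>prod_mset M\<bar> \<ge> 1" and c: "c = 4 \<or> 6 \<le> c \<and> c \<le> 25"
  shows "sum_mset (image_mset abs M) \<ge> (20 + c) / 6"
proof -
  obtain xs where M: "M = mset xs" and "sorted xs" "length xs = 4"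
    using sorted_mset_listE size by metis
  then obtain x y z w where "xs = [x, y, z, w]" by (auto simp: numeral_eq_Suc length_Suc_conv)
  then have M: "M = {#x, y, z, w#}" and "x \<le> y" "y \<le> z" "z \<le> w"
    using M \<open>sorted xs\<close> by auto
  have "y \<noteq> 0" "z \<noteq> 0" using prod M by auto
  then consider "z < 0" | "y > 0" | "y < 0" "z > 0" by linarith
  then show ?thesis
  proof cases
    case 1
    then have "w = - x + - y + - z" "w > 0" "x < 0" "y < 0" using M sum \<open>x \<le> y\<close> \<open>y \<le> z\<close> by auto
    moreover have "w\<^sup>2 + (- x)\<^sup>2 + (- y)\<^sup>2 + (- z)\<^sup>2 = c" using squares M by (simp add: add_ac)
    moreover have "w * - x * - y * - z \<ge> 1"
      using prod M 1 \<open>w > 0\<close> \<open>x < 0\<close> \<open>y < 0\<close> by (simp add: abs_mult mult_ac)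
    ultimately have "2 * w \<ge> (20 + c) / 6"
      using sum_bound_one_vs_three[of "- x" "- y" "- z" w c] 1 c by auto
    then show ?thesis using M 1 \<open>w > 0\<close> \<open>x < 0\<close> \<open>y < 0\<close> \<open>w = - x + - y + - z\<close> by simp
  next
    case 2
    then have "- x = y + z + w" "z > 0" "w > 0" using M sum \<open>y \<le> z\<close> \<open>z \<le> w\<close> by auto
    moreover have "(- x)\<^sup>2 + y\<^sup>2 + z\<^sup>2 + w\<^sup>2 = c" using squares M by (simp add: add_ac)
    moreover have "- x * y * z * w \<ge> 1"
      using prod M 2 \<open>z > 0\<close> \<open>w > 0\<close> \<open>- x = y + z + w\<close> by (simp add: abs_mult mult_ac)
    ultimately have "2 * - x \<ge> (20 + c) / 6"
      using sum_bound_one_vs_three[of y z w "- x" c] 2 c by auto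
    then show ?thesis using M 2 \<open>z > 0\<close> \<open>w > 0\<close> \<open>- x = y + z + w\<close> by simp
  next
    case 3
    then have "z + w = - x + - y" "w > 0" "x < 0" using M sum \<open>x \<le> y\<close> \<open>z \<le> w\<close> by auto
    moreover have "z\<^sup>2 + w\<^sup>2 + (- x)\<^sup>2 + (- y)\<^sup>2 = c" using squares M by (simp add: add_ac)
    moreover have "z * w * - x * - y \<ge> 1"
      using prod M 3 \<open>w > 0\<close> \<open>x < 0\<close> by (simp add: abs_mult mult_ac)
    ultimately have "2 * (z + w) \<ge> (20 + c) / 6"
      using sum_bound_two_vs_two[of z w "- x" "- y" c] 3 c by auto
    then show ?thesis using M 3 \<open>w > 0\<close> \<open>x < 0\<close> \<open>z + w = - x + - y\<close> by simp
  qed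
qed

section \<open>Trace and spectrum\<close>

definition mat_trace :: "'a::comm_ring_1 mat \<Rightarrow> 'a" where
  "mat_trace A = sum_list (diag_mat A)"

lemma mat_trace_sum: "mat_trace A = (\<Sum>i<dim_row A. A $$ (i, i))"
  unfolding mat_trace_def diag_mat_def
  by (simp add: sum_set_upt_conv_sum_list_nat[symmetric] atLeast0LessThan)

lemma mat_trace_mult:
  assumes "A \<in> carrier_mat n m" "B \<in> carrier_mat m n"
  shows "mat_trace (A * B) = (\<Sum>i<n. \<Sum>k<m. A $$ (i, k) * B $$ (k, i))"
  using assms unfolding mat_trace_sum
  by (auto simp: scalar_prod_def atLeast0LessThan intro!: sum.cong)

lemma mat_trace_mult_comm:
  assumes A: "A \<in> carrier_mat n m" and B: "B \<in> carrier_mat m n"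
  shows "mat_trace (A * B) = mat_trace (B * A)"
  unfolding mat_trace_mult[OF A B] mat_trace_mult[OF B A]
  by (subst sum.swap) (simp add: mult.commute)

lemma mat_trace_similar:
  assumes "similar_mat A B"
  shows "mat_trace A = mat_trace B"
proof -
  obtain n P Q where carrier: "{A, B, P, Q} \<subseteq> carrier_mat n n"
    and inverse: "Q * P = 1\<^sub>m n" and A: "A = P * B * Q"
    using similar_matD[OF assms] by blast
  then have "mat_trace A = mat_trace (Q * (P * B))"
    by (metis insert_subset mat_trace_mult_comm mult_carrier_mat)
  also have "Q * (P * B) = B"
    using carrier inverse by (metis assoc_mult_mat insert_subset left_mult_one_mat)
  finally show ?thesis .
qed

lemma diag_mat_mult_upper_triangular:
  assumes A: "A \<in> carrier_mat n n" and B: "B \<in> carrier_mat n n"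
    and upper_A: "upper_triangular A" and upper_B: "upper_triangular B"
  shows "diag_mat (A * B) = map2 (*) (diag_mat A) (diag_mat B)"
proof -
  have "(A * B) $$ (i, i) = A $$ (i, i) * B $$ (i, i)" if "i < n" for i
  proof -
    have "(A * B) $$ (i, i) = (\<Sum>k<n. A $$ (i, k) * B $$ (k, i))"
      using A B that by (auto simp: scalar_prod_def atLeast0LessThan intro!: sum.cong)
    also have "\<dots> = (\<Sum>k\<in>{i}. A $$ (i, k) * B $$ (k, i))"
    proof (rule sum.mono_neutral_right)
      show "\<forall>k\<in>{..<n} - {i}. A $$ (i, k) * B $$ (k, i) = 0"
      proof
        fix k assume "k \<in> {..<n} - {i}"
        then consider "k < i" | "i < k" "k < n" by (auto simp: neq_iff)
        then show "A $$ (i, k) * B $$ (k, i) = 0"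
          using upper_triangularD[OF upper_A] upper_triangularD[OF upper_B] A B that by cases auto
      qed
    qed (use that in auto)
    finally show ?thesis by simp
  qed
  then show ?thesis using A B by (intro nth_equalityI) (auto simp: diag_mat_def)
qed

lemma similar_mat_square:
  assumes "similar_mat A B"
  shows "similar_mat (A * A) (B * B)"
proof -
  obtain P Q where wit: "similar_mat_wit A B P Q" using assms unfolding similar_mat_def by blast
  obtain n where "A \<in> carrier_mat n n" "B \<in> carrier_mat n n" using similar_matD[OF assms] by auto
  then have "A ^\<^sub>m 2 = A * A" "B ^\<^sub>m 2 = B * B" by (simp_all add: numeral_2_eq_2)
  then show ?thesis using similar_mat_wit_pow[OF wit, of 2] unfolding similar_mat_def by auto
qed

lemma complex_spectrum_trace_det:
  fixes A :: "complex mat"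
  assumes A: "A \<in> carrier_mat n n"
  obtains es where "char_poly A = (\<Prod>e\<leftarrow>es. [:- e, 1:])" "length es = n"
    "sum_list es = mat_trace A" "sum_list (map (\<lambda>e. e\<^sup>2) es) = mat_trace (A * A)"
    "prod_list es = det A"
proof -
  obtain B where B: "B \<in> carrier_mat n n" and upper: "upper_triangular B"
    and similar: "similar_mat A B"
    using char_poly_factorized[OF A] schur_decomposition_exists[OF A] by blast
  show thesis
  proof
    show "char_poly A = (\<Prod>e\<leftarrow>diag_mat B. [:- e, 1:])"
      using char_poly_similar[OF similar] char_poly_upper_triangular[OF B upper] by simp
    show "length (diag_mat B) = n" using B by (simp add: diag_mat_def)
    show "sum_list (diag_mat B) = mat_trace A"
      using mat_trace_similar[OF similar] unfolding mat_trace_def by simp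
    have "diag_mat (B * B) = map (\<lambda>e. e\<^sup>2) (diag_mat B)"
      unfolding diag_mat_mult_upper_triangular[OF B B upper upper]
      by (simp add: zip_same_conv_map power2_eq_square)
    then show "sum_list (map (\<lambda>e. e\<^sup>2) (diag_mat B)) = mat_trace (A * A)"
      using mat_trace_similar[OF similar_mat_square[OF similar]] unfolding mat_trace_def by simp
    show "prod_list (diag_mat B) = det A"
      using det_upper_triangular[OF upper B] det_similar[OF similar] by simp
  qed
qed

lemma proots_prod_linear_factors:
  "proots (\<Prod>e\<leftarrow>es. [:- e, 1:]) = mset (es :: 'a::idom list)"
proof (induction es)
  case (Cons e es)
  have "[:- e, 1:] \<noteq> 0" "(\<Prod>e\<leftarrow>es. [:- e, 1:]) \<noteq> 0" by auto
  then have "proots ([:- e, 1:] * (\<Prod>e\<leftarrow>es. [:- e, 1:]))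
      = proots [:- e, 1:] + proots (\<Prod>e\<leftarrow>es. [:- e, 1:])"
    by (rule proots_mult)
  also have "\<dots> = add_mset e (mset es)" using Cons.IH by simp
  finally show ?case by (simp only: list.map prod_list.Cons mset.simps)
qed simp

lemma char_poly_nonzero: "(A :: complex mat) \<in> carrier_mat n n \<Longrightarrow> char_poly A \<noteq> 0"
  using degree_monic_char_poly[of A n] by auto

lemma eigenvalue_real_symmetric:
  fixes A :: "real mat"
  assumes A: "A \<in> carrier_mat n n" and symmetric: "transpose_mat A = A"
    and eigenvalue: "eigenvalue (map_mat complex_of_real A) e"
  shows "Im e = 0"
proof -
  let ?C = "map_mat complex_of_real A"
  have C: "?C \<in> carrier_mat n n" using A by simp
  obtain v where v: "v \<in> carrier_vec n" "v \<noteq> 0\<^sub>v n" and eigen: "?C *\<^sub>v v = e \<cdot>\<^sub>v v"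
    using eigenvalue C unfolding eigenvalue_def eigenvector_def by auto
  have real_rows: "conjugate (row ?C i) = row ?C i" if "i < n" for i
    using A that by (intro eq_vecI) auto
  have "?C *\<^sub>v conjugate v = conjugate (?C *\<^sub>v v)"
  proof (rule eq_vecI)
    fix i assume "i < dim_vec (conjugate (?C *\<^sub>v v))"
    then have i: "i < n" using A by simp
    have "conjugate (row ?C i \<bullet> v) = conjugate (row ?C i) \<bullet> conjugate v"
      using A v(1) i by (intro conjugate_sprod_vec[of _ n]) auto
    then show "(?C *\<^sub>v conjugate v) $ i = conjugate (?C *\<^sub>v v) $ i"
      using A i real_rows[OF i] by simp
  qed (use A in simp)
  then have eigen_conj: "?C *\<^sub>v conjugate v = conjugate e \<cdot>\<^sub>v conjugate v"
    unfolding eigen by (simp add: conjugate_smult_vec)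
  \<comment> \<open>\<open>conjugate v \<bullet> (C v)\<close> equals both \<open>e |v|\<^sup>2\<close> and \<open>cnj e |v|\<^sup>2\<close>, as \<open>C\<close> is real and symmetric\<close>
  have "transpose_mat ?C = ?C" using symmetric by (metis map_mat_transpose)
  then have "(?C *\<^sub>v conjugate v) \<bullet> v = conjugate v \<bullet> (?C *\<^sub>v v)"
    using transpose_vec_mult_scalar[OF C v(1), of "conjugate v"] v(1) by simp
  then have "conjugate e * (v \<bullet>c v) = e * (v \<bullet>c v)"
    unfolding eigen_conj eigen using v(1) by (simp add: conjugate_vec_sprod_comm[OF v(1) v(1)])
  moreover have "v \<bullet>c v \<noteq> 0" using v by simp
  ultimately have "cnj e = e" by simp
  then show ?thesis by (simp add: complex_eq_iff)
qed

lemma real_symmetric_spectrum: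
  fixes A :: "real mat"
  assumes A: "A \<in> carrier_mat n n" and symmetric: "transpose_mat A = A"
  obtains \<Lambda> :: "real multiset" where
    "proots (char_poly (map_mat complex_of_real A)) = image_mset complex_of_real \<Lambda>"
    "size \<Lambda> = n" "sum_mset \<Lambda> = mat_trace A"
    "sum_mset (image_mset (\<lambda>x. x\<^sup>2) \<Lambda>) = mat_trace (A * A)" "prod_mset \<Lambda> = det A"
proof -
  let ?C = "map_mat complex_of_real A"
  have C: "?C \<in> carrier_mat n n" using A by simp
  obtain es where char_poly: "char_poly ?C = (\<Prod>e\<leftarrow>es. [:- e, 1:])" and "length es = n"
    and sum: "sum_list es = mat_trace ?C" and squares: "sum_list (map (\<lambda>e. e\<^sup>2) es) = mat_trace (?C * ?C)"
    and prod: "prod_list es = det ?C"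
    by (rule complex_spectrum_trace_det[OF C])
  have "Im e = 0" if "e \<in> set es" for e
  proof (rule eigenvalue_real_symmetric[OF A symmetric])
    have "poly (char_poly ?C) e = 0" unfolding char_poly using that by (simp add: poly_prod_list_zero_iff)
    then show "eigenvalue ?C e" using eigenvalue_root_char_poly[OF C] by simp
  qed
  then have "\<forall>e\<in>set es. \<exists>x. e = complex_of_real x" by (metis complex_is_Real_iff Reals_cases)
  then obtain ls where es: "es = map complex_of_real ls" unfolding ex_map_conv[symmetric] by blast
  have trace: "mat_trace ?C = complex_of_real (mat_trace A)"
    using A unfolding mat_trace_def by (simp add: diag_mat_map)
  have "A * A \<in> carrier_mat n n" "?C * ?C = map_mat complex_of_real (A * A)"
    using A by (simp_all add: of_real_hom.mat_hom_mult)
  then have trace_square: "mat_trace (?C * ?C) = complex_of_real (mat_trace (A * A))"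
    unfolding mat_trace_def by (simp add: diag_mat_map)
  have es_squares: "map (\<lambda>e. e\<^sup>2) es = map complex_of_real (map (\<lambda>x. x\<^sup>2) ls)"
    unfolding es by simp
  show thesis
  proof
    show "proots (char_poly ?C) = image_mset complex_of_real (mset ls)"
      unfolding char_poly proots_prod_linear_factors es by simp
    show "size (mset ls) = n" using \<open>length es = n\<close> unfolding es by simp
    have "complex_of_real (sum_list ls) = complex_of_real (mat_trace A)"
      using sum unfolding es trace of_real_hom.hom_sum_list .
    then show "sum_mset (mset ls) = mat_trace A" by (simp add: sum_mset_sum_list)
    have "complex_of_real (sum_list (map (\<lambda>x. x\<^sup>2) ls)) = complex_of_real (mat_trace (A * A))"
      using squares unfolding es_squares trace_square of_real_hom.hom_sum_list .
    then show "sum_mset (image_mset (\<lambda>x. x\<^sup>2) (mset ls)) = mat_trace (A * A)"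
      by (simp add: sum_mset_sum_list flip: mset_map)
    have "complex_of_real (prod_list ls) = complex_of_real (det A)"
      using prod unfolding es of_real_hom.hom_prod_list of_real_hom.hom_det .
    then show "prod_mset (mset ls) = det A" by (simp add: prod_mset_prod_list)
  qed
qed

section \<open>Adjacency matrices of simple graphs\<close>

lemma simple_graphD:
  assumes "simple_graph n E" "E i j"
  shows "i < n" "j < n" "i \<noteq> j" "E j i"
  using assms unfolding simple_graph_def by blast+

lemma arcs_subset_square:
  "simple_graph n E \<Longrightarrow> {(i, j). E i j} \<subseteq> {..<n} \<times> {..<n}"
  by (auto dest: simple_graphD)

lemma finite_arcs: "simple_graph n E \<Longrightarrow> finite {(i, j). E i j}"
  using arcs_subset_square finite_subset by blast

lemma dim_adj_matrix [simp]: "dim_row (adj_matrix n E) = n" "dim_col (adj_matrix n E) = n"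
  by (simp_all add: adj_matrix_def)

lemma adj_matrix_carrier [simp]: "adj_matrix n E \<in> carrier_mat n n"
  by (simp add: adj_matrix_def)

lemma adj_matrix_index [simp]:
  "i < n \<Longrightarrow> j < n \<Longrightarrow> adj_matrix n E $$ (i, j) = (if E i j then 1 else 0)"
  by (simp add: adj_matrix_def)

lemma adj_matrix_symmetric:
  assumes "simple_graph n E"
  shows "transpose_mat (adj_matrix n E) = adj_matrix n E"
  unfolding adj_matrix_def by (rule eq_matI) (auto dest: simple_graphD(4)[OF assms])

lemma mat_trace_adj_matrix:
  assumes "simple_graph n E"
  shows "mat_trace (adj_matrix n E) = 0"
proof -
  have "\<not> E i i" for i using simple_graphD(3)[OF assms] by blast
  then show ?thesis by (simp add: mat_trace_sum)
qed

lemma mat_trace_adj_matrix_square: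
  assumes G: "simple_graph n E"
  shows "mat_trace (adj_matrix n E * adj_matrix n E) = real (card {(i, j). E i j})"
proof -
  have "mat_trace (adj_matrix n E * adj_matrix n E)
      = (\<Sum>(i, k)\<in>{..<n} \<times> {..<n}. if E i k then 1 else 0)"
    unfolding mat_trace_mult[OF adj_matrix_carrier adj_matrix_carrier] sum.cartesian_product
    by (intro sum.cong) (auto dest: simple_graphD[OF G])
  also have "\<dots> = real (card ({..<n} \<times> {..<n} \<inter> {(i, j). E i j}))"
    by (simp add: sum.If_cases case_prod_unfold)
  also have "{..<n} \<times> {..<n} \<inter> {(i, j). E i j} = {(i, j). E i j}"
    using arcs_subset_square[OF G] by blast
  finally show ?thesis .
qed

lemma card_arcs_eq_twice_num_edges:
  assumes G: "simple_graph n E"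
  shows "card {(i, j). E i j} = 2 * num_edges n E"
proof -
  define L where "L = {(i, j). i < j \<and> j < n \<and> E i j}"
  have "{(i, j). E i j} = L \<union> prod.swap ` L"
  proof (intro equalityI subsetI)
    fix p assume "p \<in> {(i, j). E i j}"
    then obtain i j where p: "p = (i, j)" and "E i j" by auto
    then consider "i < j" | "j < i" using simple_graphD(3)[OF G] neq_iff by blast
    then show "p \<in> L \<union> prod.swap ` L"
      using p \<open>E i j\<close> simple_graphD[OF G \<open>E i j\<close>] unfolding L_def by cases (auto simp: image_iff)
  qed (auto simp: L_def intro: simple_graphD(4)[OF G])
  moreover have "finite L" using finite_arcs[OF G] by (rule rev_finite_subset) (auto simp: L_def)
  moreover have "L \<inter> prod.swap ` L = {}" unfolding L_def by auto
  ultimately have "card {(i, j). E i j} = card L + card (prod.swap ` L)"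
    by (simp add: card_Un_disjoint)
  also have "card (prod.swap ` L) = card L" by (simp add: card_image)
  finally show ?thesis unfolding num_edges_def L_def by simp
qed

lemma avg_degree_eq_card_arcs:
  "simple_graph n E \<Longrightarrow> avg_degree n E = real (card {(i, j). E i j}) / real n"
  unfolding avg_degree_def by (simp add: card_arcs_eq_twice_num_edges)

lemma card_arcs_le:
  assumes G: "simple_graph n E"
  shows "card {(i, j). E i j} \<le> n * n - n"
proof -
  let ?diagonal = "(\<lambda>i. (i, i)) ` {..<n}"
  have "{(i, j). E i j} \<subseteq> {..<n} \<times> {..<n} - ?diagonal"
    using arcs_subset_square[OF G] by (auto dest: simple_graphD[OF G])
  then have "card {(i, j). E i j} \<le> card ({..<n} \<times> {..<n} - ?diagonal)"
    by (intro card_mono) auto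
  also have "\<dots> = n * n - n"
    by (subst card_Diff_subset) (auto simp: card_image inj_on_def card_cartesian_product)
  finally show ?thesis .
qed

lemma adj_matrix_spectrum:
  assumes G: "simple_graph n E"
  obtains \<Lambda> :: "real multiset" where "size \<Lambda> = n"
    "energy n E = sum_mset (image_mset abs \<Lambda>)" "sum_mset \<Lambda> = 0"
    "sum_mset (image_mset (\<lambda>x. x\<^sup>2) \<Lambda>) = real (card {(i, j). E i j})"
    "prod_mset \<Lambda> = det (adj_matrix n E)"
proof -
  obtain \<Lambda> where roots: "proots (char_poly (map_mat complex_of_real (adj_matrix n E)))
      = image_mset complex_of_real \<Lambda>"
    and "size \<Lambda> = n" "sum_mset \<Lambda> = mat_trace (adj_matrix n E)"
    "sum_mset (image_mset (\<lambda>x. x\<^sup>2) \<Lambda>) = mat_trace (adj_matrix n E * adj_matrix n E)"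
    "prod_mset \<Lambda> = det (adj_matrix n E)"
    using real_symmetric_spectrum[OF adj_matrix_carrier adj_matrix_symmetric[OF G]] by blast
  moreover have "energy n E = sum_mset (image_mset abs \<Lambda>)"
    unfolding energy_def roots by (simp add: image_mset.compositionality comp_def)
  ultimately show thesis
    using that mat_trace_adj_matrix[OF G] mat_trace_adj_matrix_square[OF G] by simp
qed

lemma nonsingular_imp_no_isolated_vertex:
  assumes G: "simple_graph n E" and nonsingular: "det (adj_matrix n E) \<noteq> 0" and i: "i < n"
  shows "\<exists>j. E i j"
proof (rule ccontr)
  assume isolated: "\<nexists>j. E i j"
  have "adj_matrix n E *\<^sub>v unit_vec n i = 0\<^sub>v n"
    using i isolated simple_graphD(4)[OF G] by (intro eq_vecI) auto
  moreover have "unit_vec n i \<noteq> (0\<^sub>v n :: real vec)"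
    using i by (metis index_unit_vec(1) index_zero_vec(1) zero_neq_one)
  ultimately have "det (adj_matrix n E) = 0"
    using det_0_iff_vec_prod_zero[OF adj_matrix_carrier] unit_vec_carrier by blast
  then show False using nonsingular by contradiction
qed

lemma nonsingular_imp_card_arcs_ge:
  assumes G: "simple_graph n E" and nonsingular: "det (adj_matrix n E) \<noteq> 0"
  shows "n \<le> card {(i, j). E i j}"
proof -
  have "{..<n} \<subseteq> fst ` {(i, j). E i j}"
    using nonsingular_imp_no_isolated_vertex[OF G nonsingular] by force
  then have "n \<le> card (fst ` {(i, j). E i j})"
    using finite_arcs[OF G] by (metis card_lessThan card_mono finite_imageI)
  also have "\<dots> \<le> card {(i, j). E i j}" using finite_arcs[OF G] by (rule card_image_le)
  finally show ?thesis .
qed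

lemma nonsingular_order_ge_2:
  assumes "simple_graph n E" "det (adj_matrix n E) \<noteq> 0" "0 < n"
  shows "2 \<le> n"
  using nonsingular_imp_card_arcs_ge[OF assms(1,2)] card_arcs_le[OF assms(1)] assms(3)
  by (cases "n = 1") auto

lemma abs_det_adj_matrix_ge_1:
  assumes "det (adj_matrix n E) \<noteq> 0"
  shows "\<bar>det (adj_matrix n E)\<bar> \<ge> 1"
proof -
  define M where "M = mat n n (\<lambda>(i, j). if E i j then 1 else (0 :: int))"
  have "adj_matrix n E = of_int_hom.mat_hom M"
    unfolding M_def adj_matrix_def by (rule eq_matI) auto
  then have det: "det (adj_matrix n E) = of_int (det M)" by simp
  then have "det M \<noteq> 0" using assms by auto
  then show ?thesis unfolding det by linarith
qed

lemma energy_ge_small_order: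
  assumes G: "simple_graph k F" and nonsingular: "det (adj_matrix k F) \<noteq> 0"
    and k: "2 \<le> k" "k \<le> 4" and N: "5 \<le> N" "k + 2 \<le> N"
  shows "real k + (real (card {(i, j). F i j}) - real k) / real N \<le> energy k F"
proof -
  define c where "c = card {(i, j). F i j}"
  obtain m where m: "c = 2 * m" using card_arcs_eq_twice_num_edges[OF G] unfolding c_def by blast
  have c_bounds: "k \<le> c" "c \<le> k * k - k"
    unfolding c_def using nonsingular_imp_card_arcs_ge[OF G nonsingular] card_arcs_le[OF G] by auto
  obtain \<Lambda> where size: "size \<Lambda> = k" and energy: "energy k F = sum_mset (image_mset abs \<Lambda>)"
    and sum: "sum_mset \<Lambda> = 0" and squares: "sum_mset (image_mset (\<lambda>x. x\<^sup>2) \<Lambda>) = real c"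
    and prod: "\<bar>prod_mset \<Lambda>\<bar> \<ge> 1"
    using adj_matrix_spectrum[OF G] abs_det_adj_matrix_ge_1[OF nonsingular] unfolding c_def by metis
  have share: "(real c - real k) / real N \<le> (real c - real k) / M" if "0 < M" "M \<le> real N" for M
    using c_bounds that by (intro divide_left_mono) auto
  consider "k = 2" | "k = 3" | "k = 4" using k by linarith
  then show ?thesis
  proof cases
    case 1
    then have "c = 2" using c_bounds by simp
    then have "sum_mset (image_mset abs \<Lambda>) = 2" using sum_abs_two size sum squares 1 by simp
    then show ?thesis using energy \<open>c = 2\<close> 1 unfolding c_def by simp
  next
    case 2
    then have "real c = 4 \<or> real c = 6" using c_bounds m by auto
    then have "(12 + real c) / 5 \<le> energy k F"
      unfolding energy using sum_abs_bound_three size sum squares prod 2 by auto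
    moreover have "(12 + real c) / 5 = real k + (real c - real k) / 5" using 2 by (simp add: field_simps)
    ultimately show ?thesis using share[of 5] N unfolding c_def[symmetric] by linarith
  next
    case 3
    then have "real c = 4 \<or> 6 \<le> real c \<and> real c \<le> 25" using c_bounds m by auto
    then have "(20 + real c) / 6 \<le> energy k F"
      unfolding energy using sum_abs_bound_four size sum squares prod 3 by auto
    moreover have "(20 + real c) / 6 = real k + (real c - real k) / 6" using 3 by (simp add: field_simps)
    ultimately show ?thesis using share[of 6] N 3 unfolding c_def[symmetric] by linarith
  qed
qed

section \<open>Relabelling and splitting graphs\<close>

definition permute_mat :: "nat \<Rightarrow> (nat \<Rightarrow> nat) \<Rightarrow> 'a mat \<Rightarrow> 'a mat" where
  "permute_mat n p M = mat n n (\<lambda>(i, j). M $$ (p i, p j))"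

lemma permutes_less_iff: "p permutes {0..<n} \<Longrightarrow> p i < n \<longleftrightarrow> i < n"
  by (metis atLeastLessThan_iff permutes_in_image permutes_others)

lemma det_permute_mat:
  fixes M :: "'a::comm_ring_1 mat"
  assumes M: "M \<in> carrier_mat n n" and p: "p permutes {0..<n}"
  shows "det (permute_mat n p M) = det M"
proof -
  define R where "R = mat n n (\<lambda>(i, j). M $$ (p i, j))"
  have R: "R \<in> carrier_mat n n" "transpose_mat R \<in> carrier_mat n n" unfolding R_def by simp_all
  define S where "S = mat n n (\<lambda>(i, j). transpose_mat R $$ (p i, j))"
  have S: "S \<in> carrier_mat n n" unfolding S_def by simp
  have "permute_mat n p M = transpose_mat S"
    by (rule eq_matI) (auto simp: permute_mat_def R_def S_def permutes_less_iff[OF p])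
  then have "det (permute_mat n p M) = det S" by (simp add: det_transpose[OF S])
  also have "\<dots> = signof p * det R"
    unfolding S_def det_permute_rows[OF R(2) p] det_transpose[OF R(1)] ..
  also have "\<dots> = signof p * signof p * det M" unfolding R_def det_permute_rows[OF M p] by simp
  also have "signof p * signof p = (1 :: 'a)" by (simp flip: of_int_mult)
  finally show ?thesis by simp
qed

lemma char_poly_permute_mat:
  assumes M: "M \<in> carrier_mat n n" and p: "p permutes {0..<n}"
  shows "char_poly (permute_mat n p M) = char_poly M"
proof -
  have "char_poly_matrix (permute_mat n p M) = permute_mat n p (char_poly_matrix M)"
    using M by (intro eq_matI) (auto simp: permute_mat_def char_poly_matrix_def
        permutes_less_iff[OF p] permutes_inj[OF p] inj_eq)
  then show ?thesis
    unfolding char_poly_def using det_permute_mat[OF char_poly_matrix_closed[OF M] p] by simp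
qed

lemma simple_graph_relabel:
  assumes p: "p permutes {0..<n}" and G: "simple_graph n E"
  shows "simple_graph n (\<lambda>i j. E (p i) (p j))"
proof (unfold simple_graph_def, intro allI impI conjI)
  fix i j assume e: "E (p i) (p j)"
  show "i < n" "j < n" using simple_graphD(1,2)[OF G e] permutes_less_iff[OF p] by auto
  show "i \<noteq> j" using simple_graphD(3)[OF G e] by auto
  show "E (p j) (p i)" using simple_graphD(4)[OF G e] .
qed

lemma card_arcs_relabel:
  assumes p: "p permutes {0..<n}"
  shows "card {(i, j). E (p i) (p j)} = card {(i, j). E i j}"
proof -
  have "{(i, j). E (p i) (p j)} = map_prod p p -` {(i, j). E i j}" by auto
  moreover have "inj (map_prod p p)" using permutes_inj[OF p] unfolding inj_def by auto
  moreover have "surj (map_prod p p)" using permutes_surj[OF p] by (metis map_prod_surj)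
  ultimately show ?thesis by (metis card_vimage_inj top_greatest)
qed

lemma adj_matrix_relabel:
  assumes p: "p permutes {0..<n}"
  shows "adj_matrix n (\<lambda>i j. E (p i) (p j)) = permute_mat n p (adj_matrix n E)"
  by (rule eq_matI) (auto simp: permute_mat_def permutes_less_iff[OF p])

lemma det_adj_matrix_relabel:
  assumes p: "p permutes {0..<n}"
  shows "det (adj_matrix n (\<lambda>i j. E (p i) (p j))) = det (adj_matrix n E)"
  unfolding adj_matrix_relabel[OF p] by (rule det_permute_mat[OF adj_matrix_carrier p])

lemma energy_relabel:
  assumes p: "p permutes {0..<n}"
  shows "energy n (\<lambda>i j. E (p i) (p j)) = energy n E"
proof -
  have "map_mat complex_of_real (adj_matrix n (\<lambda>i j. E (p i) (p j)))
      = permute_mat n p (map_mat complex_of_real (adj_matrix n E))"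
    unfolding adj_matrix_relabel[OF p]
    by (rule eq_matI) (auto simp: permute_mat_def permutes_less_iff[OF p])
  then show ?thesis
    unfolding energy_def
    using char_poly_permute_mat[OF _ p, of "map_mat complex_of_real (adj_matrix n E)"] by simp
qed

definition graph_prefix :: "nat \<Rightarrow> (nat \<Rightarrow> nat \<Rightarrow> bool) \<Rightarrow> nat \<Rightarrow> nat \<Rightarrow> bool" where
  "graph_prefix a E i j \<longleftrightarrow> i < a \<and> j < a \<and> E i j"

definition graph_suffix :: "nat \<Rightarrow> (nat \<Rightarrow> nat \<Rightarrow> bool) \<Rightarrow> nat \<Rightarrow> nat \<Rightarrow> bool" where
  "graph_suffix a E i j \<longleftrightarrow> E (a + i) (a + j)"

lemma simple_graph_prefix: "simple_graph n E \<Longrightarrow> simple_graph a (graph_prefix a E)"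
  unfolding simple_graph_def graph_prefix_def by blast

lemma simple_graph_suffix: "simple_graph n E \<Longrightarrow> simple_graph (n - a) (graph_suffix a E)"
  unfolding simple_graph_def graph_suffix_def by fastforce

context
  fixes n a :: nat and E :: "nat \<Rightarrow> nat \<Rightarrow> bool"
  assumes G: "simple_graph n E" and a: "a \<le> n"
    and no_cross: "\<And>i j. i < a \<Longrightarrow> a \<le> j \<Longrightarrow> \<not> E i j"
begin

lemma no_cross_converse: "i < a \<Longrightarrow> a \<le> j \<Longrightarrow> \<not> E j i"
  using no_cross simple_graphD(4)[OF G] by blast

lemma adj_matrix_split:
  "adj_matrix n E = four_block_mat (adj_matrix a (graph_prefix a E)) (0\<^sub>m a (n - a))
     (0\<^sub>m (n - a) a) (adj_matrix (n - a) (graph_suffix a E))"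
  using a no_cross no_cross_converse
  by (intro eq_matI) (auto simp: adj_matrix_def graph_prefix_def graph_suffix_def)

lemma det_adj_matrix_split:
  "det (adj_matrix n E) = det (adj_matrix a (graph_prefix a E)) * det (adj_matrix (n - a) (graph_suffix a E))"
  unfolding adj_matrix_split by (rule det_four_block_mat_upper_right_zero) auto

lemma energy_split: "energy n E = energy a (graph_prefix a E) + energy (n - a) (graph_suffix a E)"
proof -
  let ?C1 = "map_mat complex_of_real (adj_matrix a (graph_prefix a E))"
  let ?C2 = "map_mat complex_of_real (adj_matrix (n - a) (graph_suffix a E))"
  have C1: "?C1 \<in> carrier_mat a a" and C2: "?C2 \<in> carrier_mat (n - a) (n - a)" by auto
  have "map_mat complex_of_real (adj_matrix n E) = four_block_mat ?C1 (0\<^sub>m a (n - a)) (0\<^sub>m (n - a) a) ?C2"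
    unfolding adj_matrix_split by (subst map_four_block_mat) (auto intro!: cong_four_block_mat)
  then have "char_poly (map_mat complex_of_real (adj_matrix n E)) = char_poly ?C1 * char_poly ?C2"
    by (rule char_poly_0_block)
      (use char_poly_factorized[OF C1] char_poly_factorized[OF C2] C1 C2 in auto)
  then show ?thesis
    unfolding energy_def by (simp add: proots_mult char_poly_nonzero[OF C1] char_poly_nonzero[OF C2])
qed

lemma card_arcs_split:
  "card {(i, j). E i j}
     = card {(i, j). graph_prefix a E i j} + card {(i, j). graph_suffix a E i j}"
proof -
  let ?shift = "\<lambda>(i, j). (a + i, a + j)"
  have "{(i, j). E i j} = {(i, j). graph_prefix a E i j} \<union> ?shift ` {(i, j). graph_suffix a E i j}"
  proof (intro equalityI subsetI)
    fix p assume "p \<in> {(i, j). E i j}"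
    then obtain i j where p: "p = (i, j)" and e: "E i j" by auto
    show "p \<in> {(i, j). graph_prefix a E i j} \<union> ?shift ` {(i, j). graph_suffix a E i j}"
    proof (cases "i < a")
      case True
      then show ?thesis using p e no_cross[of i j] by (auto simp: graph_prefix_def)
    next
      case False
      then have "a \<le> j" using e no_cross_converse[of j i] by force
      then have "(i - a, j - a) \<in> {(i, j). graph_suffix a E i j}"
        using False e by (simp add: graph_suffix_def)
      moreover have "p = ?shift (i - a, j - a)" using False \<open>a \<le> j\<close> p by auto
      ultimately show ?thesis by blast
    qed
  qed (auto simp: graph_prefix_def graph_suffix_def)
  moreover have "{(i, j). graph_prefix a E i j} \<inter> ?shift ` {(i, j). graph_suffix a E i j} = {}"
    by (auto simp: graph_prefix_def)
  moreover have "inj_on ?shift {(i, j). graph_suffix a E i j}" by (auto simp: inj_on_def)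
  ultimately show ?thesis
    using finite_arcs[OF simple_graph_prefix[OF G]] finite_arcs[OF simple_graph_suffix[OF G]]
    by (simp add: card_Un_disjoint card_image)
qed

end

lemma permutation_to_front:
  assumes S: "S \<subseteq> {0..<n}"
  obtains p where "p permutes {0..<n}" "\<And>i. i < card S \<Longrightarrow> p i \<in> S"
    "\<And>i. card S \<le> i \<Longrightarrow> i < n \<Longrightarrow> p i \<notin> S"
proof -
  have fin: "finite S" using S finite_subset by blast
  define xs where "xs = sorted_list_of_set S @ sorted_list_of_set ({0..<n} - S)"
  have "distinct xs" "set xs = {0..<n}" unfolding xs_def using S fin by auto
  then have "length xs = n" using distinct_card by fastforce
  define p where "p i = (if i < n then xs ! i else i)" for i
  have "bij_betw ((!) xs) {0..<n} {0..<n}"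
    using bij_betw_nth[OF \<open>distinct xs\<close>] \<open>length xs = n\<close> \<open>set xs = {0..<n}\<close>
    by (simp add: lessThan_atLeast0)
  then have "bij_betw p {0..<n} {0..<n}" by (rule bij_betw_cong[THEN iffD1, rotated]) (simp add: p_def)
  then have "p permutes {0..<n}" by (rule bij_imp_permutes) (simp add: p_def)
  moreover have "p i \<in> S" if "i < card S" for i
  proof -
    have "i < n" using that card_mono[OF _ S] by simp
    then have "p i = sorted_list_of_set S ! i" using that by (simp add: p_def xs_def nth_append)
    then show ?thesis using that fin by (metis nth_mem length_sorted_list_of_set set_sorted_list_of_set)
  qed
  moreover have "p i \<notin> S" if "card S \<le> i" "i < n" for i
  proof -
    let ?rest = "sorted_list_of_set ({0..<n} - S)"
    have "i - card S < length ?rest" using that \<open>length xs = n\<close> unfolding xs_def by simp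
    moreover have "p i = ?rest ! (i - card S)" using that by (simp add: p_def xs_def nth_append)
    ultimately show ?thesis by (metis Diff_iff finite_Diff finite_atLeastLessThan nth_mem set_sorted_list_of_set)
  qed
  ultimately show thesis using that by blast
qed

lemma disconnected_graph_split:
  assumes G: "simple_graph n E" and "0 < n" and disconnected: "\<not> connected_graph n E"
  obtains p a where "p permutes {0..<n}" "0 < a" "a < n"
    "\<And>i j. i < a \<Longrightarrow> a \<le> j \<Longrightarrow> \<not> E (p i) (p j)"
proof -
  define S where "S = {j. j < n \<and> E\<^sup>*\<^sup>* 0 j}"
  have S: "S \<subseteq> {0..<n}" unfolding S_def by auto
  have closed: "v \<in> S" if "u \<in> S" "E u v" for u v
  proof -
    have "E\<^sup>*\<^sup>* 0 u" using \<open>u \<in> S\<close> unfolding S_def by simp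
    then have "E\<^sup>*\<^sup>* 0 v" using \<open>E u v\<close> by (rule rtranclp.rtrancl_into_rtrancl)
    then show ?thesis using simple_graphD(2)[OF G \<open>E u v\<close>] unfolding S_def by simp
  qed
  have "S \<noteq> {0..<n}"
  proof
    assume "S = {0..<n}"
    then have reach: "E\<^sup>*\<^sup>* 0 j" if "j < n" for j
      using that unfolding set_eq_iff S_def by auto
    have "symp E" using simple_graphD(4)[OF G] by (rule sympI)
    then have "symp E\<^sup>*\<^sup>*" by (rule symp_rtranclp)
    have "connected_graph n E" unfolding connected_graph_def
    proof (intro allI impI)
      fix i j assume "i < n" "j < n"
      show "E\<^sup>*\<^sup>* i j"
        using sympD[OF \<open>symp E\<^sup>*\<^sup>*\<close> reach[OF \<open>i < n\<close>]] reach[OF \<open>j < n\<close>] by (rule rtranclp_trans)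
    qed
    then show False using disconnected by contradiction
  qed
  then have "card S < n" using psubset_card_mono[of "{0..<n}" S] S by auto
  moreover have "0 < card S" using \<open>0 < n\<close> S unfolding S_def by (auto simp: card_gt_0_iff)
  moreover obtain p where p: "p permutes {0..<n}" and front: "\<And>i. i < card S \<Longrightarrow> p i \<in> S"
    and behind: "\<And>i. card S \<le> i \<Longrightarrow> i < n \<Longrightarrow> p i \<notin> S"
    using permutation_to_front[OF S] by metis
  moreover have "\<not> E (p i) (p j)" if "i < card S" "card S \<le> j" for i j
  proof
    assume e: "E (p i) (p j)"
    then have "j < n" using simple_graphD(2)[OF G e] permutes_less_iff[OF p] by simp
    then show False using closed[OF front[OF that(1)] e] behind[OF that(2)] by simp
  qed
  ultimately show thesis by (intro that[of p "card S"])
qed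

section \<open>Reduction to connected graphs\<close>

lemma energy_share_ge:
  assumes G: "simple_graph k F" and nonsingular: "det (adj_matrix k F) \<noteq> 0"
    and k: "2 \<le> k" "k + 2 \<le> n" and n: "5 \<le> n"
    and large: "5 \<le> k \<Longrightarrow> real k - 1 + avg_degree k F \<le> energy k F"
  shows "real k + (real (card {(i, j). F i j}) - real k) / real n \<le> energy k F"
proof (cases "5 \<le> k")
  case True
  define c where "c = real (card {(i, j). F i j})"
  have "real k \<le> c" using nonsingular_imp_card_arcs_ge[OF G nonsingular] unfolding c_def by simp
  then have "(c - real k) / real n \<le> (c - real k) / real k" using k by (intro divide_left_mono) auto
  also have "\<dots> = avg_degree k F - 1"
    using k unfolding avg_degree_eq_card_arcs[OF G] c_def by (simp add: field_simps)
  finally show ?thesis using large[OF True] unfolding c_def by linarith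
next
  case False
  then show ?thesis using energy_ge_small_order[OF G nonsingular k(1) _ n k(2)] by simp
qed

lemma energy_bound_from_shares:
  assumes G: "simple_graph n E" and a: "a < n"
    and no_cross: "\<And>i j. i < a \<Longrightarrow> a \<le> j \<Longrightarrow> \<not> E i j"
    and prefix: "real a + (real (card {(i, j). graph_prefix a E i j}) - real a) / real n
      \<le> energy a (graph_prefix a E)"
    and suffix: "real (n - a) + (real (card {(i, j). graph_suffix a E i j}) - real (n - a)) / real n
      \<le> energy (n - a) (graph_suffix a E)"
  shows "real n - 1 + avg_degree n E \<le> energy n E"
proof -
  define c1 c2 where "c1 = real (card {(i, j). graph_prefix a E i j})"
    and "c2 = real (card {(i, j). graph_suffix a E i j})"
  have "card {(i, j). E i j} = card {(i, j). graph_prefix a E i j} + card {(i, j). graph_suffix a E i j}"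
    by (rule card_arcs_split[OF G less_imp_le[OF a] no_cross])
  then have "avg_degree n E = (c1 + c2) / real n"
    unfolding avg_degree_eq_card_arcs[OF G] c1_def c2_def by simp
  moreover have "real a + (c1 - real a) / real n + (real (n - a) + (c2 - real (n - a)) / real n)
      = real n - 1 + (c1 + c2) / real n"
    using a by (simp add: field_simps)
  ultimately show ?thesis
    using prefix suffix energy_split[OF G less_imp_le[OF a] no_cross] unfolding c1_def c2_def by linarith
qed

lemma energy_bound_split:
  assumes G: "simple_graph n E" and nonsingular: "det (adj_matrix n E) \<noteq> 0" and n: "5 \<le> n"
    and a: "0 < a" "a < n" and no_cross: "\<And>i j. i < a \<Longrightarrow> a \<le> j \<Longrightarrow> \<not> E i j"
    and smaller: "\<And>k F. k < n \<Longrightarrow> 5 \<le> k \<Longrightarrow> simple_graph k F \<Longrightarrow> det (adj_matrix k F) \<noteq> 0 \<Longrightarrow>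
      real k - 1 + avg_degree k F \<le> energy k F"
  shows "real n - 1 + avg_degree n E \<le> energy n E"
proof (rule energy_bound_from_shares[OF G a(2) no_cross])
  note split = G less_imp_le[OF a(2)] no_cross
  have "det (adj_matrix a (graph_prefix a E)) * det (adj_matrix (n - a) (graph_suffix a E)) \<noteq> 0"
    using nonsingular det_adj_matrix_split[OF split] by simp
  then have nonsingular_prefix: "det (adj_matrix a (graph_prefix a E)) \<noteq> 0"
    and nonsingular_suffix: "det (adj_matrix (n - a) (graph_suffix a E)) \<noteq> 0" by auto
  note prefix = simple_graph_prefix[OF G] and suffix = simple_graph_suffix[OF G]
  have "2 \<le> a" "2 \<le> n - a"
    using nonsingular_order_ge_2[OF prefix nonsingular_prefix]
      nonsingular_order_ge_2[OF suffix nonsingular_suffix] a by auto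
  show "real a + (real (card {(i, j). graph_prefix a E i j}) - real a) / real n
      \<le> energy a (graph_prefix a E)"
    using \<open>2 \<le> a\<close> \<open>2 \<le> n - a\<close> n a smaller[OF a(2) _ prefix nonsingular_prefix]
    by (intro energy_share_ge[OF prefix nonsingular_prefix]) auto
  show "real (n - a) + (real (card {(i, j). graph_suffix a E i j}) - real (n - a)) / real n
      \<le> energy (n - a) (graph_suffix a E)"
    using \<open>2 \<le> a\<close> \<open>2 \<le> n - a\<close> n a smaller[of "n - a", OF _ _ suffix nonsingular_suffix]
    by (intro energy_share_ge[OF suffix nonsingular_suffix]) auto
qed

lemma energy_bound_disconnected:
  assumes G: "simple_graph n E" and nonsingular: "det (adj_matrix n E) \<noteq> 0" and n: "5 \<le> n"
    and disconnected: "\<not> connected_graph n E"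
    and smaller: "\<And>k F. k < n \<Longrightarrow> 5 \<le> k \<Longrightarrow> simple_graph k F \<Longrightarrow> det (adj_matrix k F) \<noteq> 0 \<Longrightarrow>
      real k - 1 + avg_degree k F \<le> energy k F"
  shows "real n - 1 + avg_degree n E \<le> energy n E"
proof -
  obtain p a where p: "p permutes {0..<n}" and a: "0 < a" "a < n"
    and no_cross: "\<And>i j. i < a \<Longrightarrow> a \<le> j \<Longrightarrow> \<not> E (p i) (p j)"
    using disconnected_graph_split[OF G _ disconnected] n by auto
  have G': "simple_graph n (\<lambda>i j. E (p i) (p j))" by (rule simple_graph_relabel[OF p G])
  have "real n - 1 + avg_degree n (\<lambda>i j. E (p i) (p j)) \<le> energy n (\<lambda>i j. E (p i) (p j))"
    by (rule energy_bound_split[OF G' _ n a no_cross smaller])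
      (simp add: det_adj_matrix_relabel[OF p] nonsingular)
  moreover have "avg_degree n (\<lambda>i j. E (p i) (p j)) = avg_degree n E"
    unfolding avg_degree_eq_card_arcs[OF G] avg_degree_eq_card_arcs[OF G'] card_arcs_relabel[OF p] ..
  ultimately show ?thesis unfolding energy_relabel[OF p] by simp
qed

theorem theorem3p6:
  assumes conn_case: "\<And>n E. n \<ge> 5 \<Longrightarrow> simple_graph n E \<Longrightarrow> connected_graph n E \<Longrightarrow>
      det (adj_matrix n E) \<noteq> 0 \<Longrightarrow> energy n E \<ge> real n - 1 + avg_degree n E"
  and "n \<ge> 5" and "simple_graph n E" and "det (adj_matrix n E) \<noteq> 0"
  shows "energy n E \<ge> real n - 1 + avg_degree n E"
  using assms(2-4)
proof (induction n arbitrary: E rule: less_induct)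
  case (less n)
  show ?case
  proof (cases "connected_graph n E")
    case True
    then show ?thesis using conn_case less.prems by blast
  next
    case False
    then show ?thesis using energy_bound_disconnected less.prems less.IH by blast
  qed
qed

end
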